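(* Let $(M,\cdot,1)$ be a monoid, $\Sigma$ a finite alphabet and $L$ the set of all functions $\Sigma^*\to M$. Let $(g'_1,f'_1),\dots,(g'_n,f'_n)$, $n\ge0$, be factorizations on $L$ and let $r_1,\dots,r_n:\Sigma^*\to\Sigma^*$ be functions (word-transformations). For each $i$ put $(g_i,f_i)=(g'_i\circ\Delta_{r_i},\,f'_i\circ\Delta_{r_i})$. Let $(g,f)=(g_1,f_1)\ast\cdots\ast(g_n,f_n)$, i.e. $$g=\prod_{i=1}^n g_i\circ(f_{i-1}\circ\cdots\circ f_1),\qquad f=f_n\circ\cdots\circ f_1$$ (product taken in the order $i=1,\dots,n$). Then for every $\ell\in L$, $$g(\ell)\cdot f(\ell)=\Delta_{r_1\circ r_2\circ\cdots\circ r_n}(\ell)=\ell\circ r_1\circ r_2\circ\cdots\circ r_n,$$ where for $n=0$ the composite word-transformation is the identity (so the right side is $\ell$).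
   Context: Let $F$ be the set of functions $L\to L$ and $G$ the set of functions $L\to M$; for $g,g'\in G$, $(g\cdot g')(\ell)=g(\ell)\cdot g'(\ell)$, and an empty product in $G$ is the constant function $1$, an empty composition in $F$ is the identity. A factorization on $L$ is a pair $(g,f)\in G\times F$ with $g(\ell)\cdot f(\ell)=\ell$ for all $\ell\in L$. For a word-transformation $r:\Sigma^*\to\Sigma^*$, $\Delta_r\in F$ is defined by $\Delta_r(\ell)=\ell\circ r$. The operation $\ast$ on $G\times F$ is $(g_1,f_1)\ast(g_2,f_2)=(g_1\cdot(g_2\circ f_1),f_2\circ f_1)$. For $m\in M$ and $\ell\in L$, $m\cdot\ell$ is the $M$-language $\gamma\mapsto m\cdot\ell(\gamma)$. *)

theory Defs
  imports Main
begin

type_synonym ('a, 'm) lang = "'a list \<Rightarrow> 'm"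

definition lscale :: "'m::monoid_mult \<Rightarrow> ('a, 'm) lang \<Rightarrow> ('a, 'm) lang" where
  "lscale m l = (\<lambda>w. m * l w)"

definition Delta :: "('a list \<Rightarrow> 'a list) \<Rightarrow> ('a, 'm) lang \<Rightarrow> ('a, 'm) lang" where
  "Delta r l = l \<circ> r"

definition factorization ::
  "((('a, 'm::monoid_mult) lang \<Rightarrow> 'm) \<times> (('a, 'm) lang \<Rightarrow> ('a, 'm) lang)) \<Rightarrow> bool" where
  "factorization gf \<longleftrightarrow> (\<forall>l. lscale (fst gf l) (snd gf l) = l)"

definition star ::
  "((('a, 'm::monoid_mult) lang \<Rightarrow> 'm) \<times> (('a, 'm) lang \<Rightarrow> ('a, 'm) lang))
   \<Rightarrow> ((('a, 'm) lang \<Rightarrow> 'm) \<times> (('a, 'm) lang \<Rightarrow> ('a, 'm) lang))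
   \<Rightarrow> ((('a, 'm) lang \<Rightarrow> 'm) \<times> (('a, 'm) lang \<Rightarrow> ('a, 'm) lang))" where
  "star p q = (\<lambda>l. fst p l * fst q (snd p l), snd q \<circ> snd p)"

definition star_list ::
  "((('a, 'm::monoid_mult) lang \<Rightarrow> 'm) \<times> (('a, 'm) lang \<Rightarrow> ('a, 'm) lang)) list
   \<Rightarrow> ((('a, 'm) lang \<Rightarrow> 'm) \<times> (('a, 'm) lang \<Rightarrow> ('a, 'm) lang))" where
  "star_list ps = foldr star ps (\<lambda>_. 1, id)"

end

theory Submission
  imports Defs
begin

text \<open>Call \<open>(g, f)\<close> a factorization of \<open>\<Delta> r\<close> if \<open>g \<ell> \<cdot> f \<ell> = \<Delta> r \<ell>\<close> for all \<open>\<ell>\<close>,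
  so the factorizations are those of \<open>\<Delta> id\<close>. Precomposing with \<open>\<Delta> s\<close> turns a factorization
  of \<open>\<Delta> r\<close> into one of \<open>\<Delta> (s \<circ> r)\<close>; and since \<open>\<Delta> s\<close> commutes with the action of \<open>M\<close>,
  the product \<open>\<ast>\<close> of factorizations of \<open>\<Delta> r\<close> and \<open>\<Delta> s\<close> is a factorization of
  \<open>\<Delta> (r \<circ> s)\<close>.\<close>

definition Delta_factorization ::
  "('a list \<Rightarrow> 'a list) \<Rightarrow> ((('a, 'm::monoid_mult) lang \<Rightarrow> 'm) \<times> (('a, 'm) lang \<Rightarrow> ('a, 'm) lang))
   \<Rightarrow> bool" where
  "Delta_factorization r gf \<longleftrightarrow> (\<forall>l. lscale (fst gf l) (snd gf l) = Delta r l)"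

lemma lscale_mult: "lscale (a * b) l = lscale a (lscale b l)"
  by (simp add: lscale_def mult.assoc)

lemma lscale_Delta: "lscale a (Delta r l) = Delta r (lscale a l)"
  by (simp add: lscale_def Delta_def o_def)

lemma Delta_Delta: "Delta r (Delta s l) = Delta (s \<circ> r) l"
  by (simp add: Delta_def o_assoc)

lemma factorization_iff_Delta_factorization_id:
  "factorization gf \<longleftrightarrow> Delta_factorization id gf"
  by (simp add: factorization_def Delta_factorization_def Delta_def)

lemma Delta_factorization_comp_Delta:
  assumes "Delta_factorization r (g, f)"
  shows "Delta_factorization (s \<circ> r) (g \<circ> Delta s, f \<circ> Delta s)"
  using assms by (simp add: Delta_factorization_def Delta_Delta)

lemma Delta_factorization_star:
  assumes p: "Delta_factorization r p" and q: "Delta_factorization s q"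
  shows "Delta_factorization (r \<circ> s) (star p q)"
  unfolding Delta_factorization_def
proof
  fix l
  let ?k = "snd p l"
  have "lscale (fst (star p q) l) (snd (star p q) l)
      = lscale (fst p l) (lscale (fst q ?k) (snd q ?k))"
    by (simp add: star_def lscale_mult)
  also have "\<dots> = Delta s (lscale (fst p l) ?k)"
    using q by (simp add: Delta_factorization_def lscale_Delta)
  also have "\<dots> = Delta (r \<circ> s) l"
    using p by (simp add: Delta_factorization_def Delta_Delta)
  finally show "lscale (fst (star p q) l) (snd (star p q) l) = Delta (r \<circ> s) l" .
qed

lemma Delta_factorization_star_list:
  assumes "list_all2 Delta_factorization rs ps"
  shows "Delta_factorization (foldr (\<circ>) rs id) (star_list ps)"
  using assms
proof (induction rule: list_all2_induct)
  \<comment> \<open>\<open>comp_def\<close>: the simplifier turns \<open>id id\<close> into \<open>\<lambda>x. x\<close>, which no longer matches \<open>id\<close>\<close>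
  case Nil
  show ?case
    by (simp add: star_list_def Delta_factorization_def lscale_def Delta_def comp_def)
next
  case (Cons r rs p ps)
  show ?case
    using Delta_factorization_star[OF Cons.hyps(1) Cons.IH] by (simp add: star_list_def comp_def)
qed

theorem lemma2:
  fixes facs :: "(((('a::finite), 'm::monoid_mult) lang \<Rightarrow> 'm) \<times> (('a, 'm) lang \<Rightarrow> ('a, 'm) lang)) list"
    and rs :: "('a list \<Rightarrow> 'a list) list"
  assumes "length rs = length facs"
    and "\<forall>p \<in> set facs. factorization p"
  shows "\<forall>l. (let gf = star_list (map2 (\<lambda>(g', f') r. (g' \<circ> Delta r, f' \<circ> Delta r)) facs rs)
              in lscale (fst gf l) (snd gf l) = Delta (foldr (\<circ>) rs id) l)"
proof -
  let ?ps = "map2 (\<lambda>(g', f') r. (g' \<circ> Delta r, f' \<circ> Delta r)) facs rs"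
  have "list_all2 Delta_factorization rs ?ps"
    unfolding list_all2_conv_all_nth
  proof (intro conjI allI impI)
    fix i assume i: "i < length rs"
    obtain g f where gf: "facs ! i = (g, f)" by fastforce
    have "Delta_factorization id (g, f)"
      using assms i gf nth_mem[of i facs]
      by (simp add: factorization_iff_Delta_factorization_id)
    then show "Delta_factorization (rs ! i) (?ps ! i)"
      using Delta_factorization_comp_Delta[of id g f "rs ! i"] assms(1) i gf by simp
  qed (use assms(1) in simp)
  then show ?thesis
    using Delta_factorization_star_list by (simp add: Delta_factorization_def Let_def)
qed

end
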